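(* Let $r=(r_1,\dots,r_n)$ be a permutation of $[n]$, let $f_r(C^{(r_a)},C^{(r_b)})=1$ if $a<b$ and $0$ if $a>b$, and let $E$ be the set of all ordered pairs of distinct classes. For every $\varepsilon>0$ there exists $\mathbf{p}=(p^{(1)},\dots,p^{(n)})\in(0,1)^n$ with $\sum_ip^{(i)}=1$ such that, with $f_u(C^{(i)},C^{(j)})=p^{(i)}/(p^{(i)}+p^{(j)})$, $$\sum_{e\in E}\big(f_r(e)-f_u(e)\big)^2<\varepsilon.$$
   Context: $C^{(1)},\dots,C^{(n)}$ are class labels; $f_r$ are the ranking graph weights and $f_u$ the situational expert graph weights generated by the categorical distribution $\mathbf{p}$. *)

theory Defs
  imports "HOL-Analysis.Analysis"
begin

text \<open>A permutation r of the classes is a bijection of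
  {..<n}; r a is the class at rank position a.\<close>

definition rank_pos :: "nat \<Rightarrow> (nat \<Rightarrow> nat) \<Rightarrow> nat \<Rightarrow> nat" where
  "rank_pos n r i = (THE a. a < n \<and> r a = i)"

definition ranking_weight :: "nat \<Rightarrow> (nat \<Rightarrow> nat) \<Rightarrow> nat \<Rightarrow> nat \<Rightarrow> real" where
  "ranking_weight n r i j = (if rank_pos n r i < rank_pos n r j then 1 else 0)"

definition expert_weight :: "(nat \<Rightarrow> real) \<Rightarrow> nat \<Rightarrow> nat \<Rightarrow> real" where
  "expert_weight p i j = p i / (p i + p j)"

definition edge_set :: "nat \<Rightarrow> (nat \<times> nat) set" where
  "edge_set n = {(i, j). i < n \<and> j < n \<and> i \<noteq> j}"

end

theory Submission
  imports Defs
begin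

text \<open>Give the class at rank position a the weight t^a with 0 < t < 1, normalised to sum 1.
  For a pair of classes at positions a \<noteq> b, the expert weight t^a / (t^a + t^b) differs
  from the ranking weight by at most t, because the ratio of the two powers is at most t.
  So the squared error is at most n^2 t^2, which is below \<epsilon> for small t.\<close>

lemma rank_pos_eq_inv_into:
  assumes "bij_betw r {..<n} {..<n}" and "i < n"
  shows "rank_pos n r i = inv_into {..<n} r i"
  unfolding rank_pos_def
proof (rule the_equality)
  show "inv_into {..<n} r i < n \<and> r (inv_into {..<n} r i) = i"
    using assms by (metis bij_betw_imp_surj_on bij_betw_inv_into_right inv_into_into lessThan_iff)
next
  fix a assume "a < n \<and> r a = i"
  then show "a = inv_into {..<n} r i"
    using assms(1) by (metis bij_betw_imp_inj_on inv_into_f_f lessThan_iff)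
qed

lemma inj_on_rank_pos:
  assumes "bij_betw r {..<n} {..<n}"
  shows "inj_on (rank_pos n r) {..<n}"
proof -
  have "inj_on (inv_into {..<n} r) {..<n}"
    using bij_betw_inv_into[OF assms] by (rule bij_betw_imp_inj_on)
  then show ?thesis
    by (rule inj_on_cong[THEN iffD1, rotated]) (simp add: rank_pos_eq_inv_into[OF assms])
qed

lemma power_div_power_add_le:
  fixes t :: real and x y :: nat
  assumes "0 < t" "t < 1" and "x < y"
  shows "t ^ y / (t ^ x + t ^ y) \<le> t"
proof -
  obtain d where d: "y = x + Suc d"
    using less_imp_Suc_add[OF \<open>x < y\<close>] by auto
  have px: "0 < t ^ x" and py: "0 < t ^ y"
    using assms by simp_all
  have "t ^ y / (t ^ x + t ^ y) \<le> t ^ y / t ^ x"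
    using px py by (intro divide_left_mono) simp_all
  also have "\<dots> = t ^ Suc d"
    using assms d by (simp add: power_add)
  also have "\<dots> \<le> t"
    using assms by (simp add: power_le_one mult_left_le)
  finally show ?thesis .
qed

lemma order_indicator_power_ratio_error:
  fixes t :: real and x y :: nat
  assumes "0 < t" "t < 1" and "x \<noteq> y"
  shows "\<bar>(if x < y then 1 else 0) - t ^ x / (t ^ x + t ^ y)\<bar> \<le> t"
proof (cases "x < y")
  case True
  have px: "0 < t ^ x" and py: "0 < t ^ y"
    using assms by simp_all
  then have "1 - t ^ x / (t ^ x + t ^ y) = t ^ y / (t ^ x + t ^ y)"
    by (simp add: field_simps)
  moreover have "t ^ x / (t ^ x + t ^ y) \<le> 1"
    using px py by simp
  ultimately show ?thesis
    using True power_div_power_add_le[OF assms(1,2) True] by simp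
next
  case False
  then have "y < x" using assms(3) by simp
  then have "t ^ x / (t ^ y + t ^ x) \<le> t"
    using power_div_power_add_le[OF assms(1,2)] by blast
  then show ?thesis
    using False assms by (simp add: add.commute)
qed

lemma expert_weight_scale:
  fixes w :: "nat \<Rightarrow> real"
  assumes "c \<noteq> 0"
  shows "expert_weight (\<lambda>k. w k / c) i j = expert_weight w i j"
  using assms unfolding expert_weight_def by (simp add: add_divide_distrib[symmetric])

lemma ranking_weight_geometric_error:
  fixes t :: real
  assumes "bij_betw r {..<n} {..<n}" and "0 < t" "t < 1"
    and "(i, j) \<in> edge_set n"
  shows "(ranking_weight n r i j - expert_weight (\<lambda>k. t ^ rank_pos n r k) i j)\<^sup>2 \<le> t\<^sup>2"
proof -
  have "rank_pos n r i \<noteq> rank_pos n r j"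
    using assms(4) inj_on_rank_pos[OF assms(1)] unfolding edge_set_def inj_on_def by auto
  then have "\<bar>ranking_weight n r i j - expert_weight (\<lambda>k. t ^ rank_pos n r k) i j\<bar> \<le> t"
    unfolding ranking_weight_def expert_weight_def
    using order_indicator_power_ratio_error[OF assms(2,3)] by simp
  then show ?thesis
    using abs_le_square_iff[of _ t] assms(2) by simp
qed

lemma normalized_weights_in_unit_interval:
  fixes w :: "'a \<Rightarrow> real"
  assumes "finite A" and "\<And>a. a \<in> A \<Longrightarrow> 0 < w a" and "x \<in> A" "y \<in> A" "x \<noteq> y"
  shows "\<forall>a\<in>A. 0 < w a / sum w A \<and> w a / sum w A < 1"
    and "(\<Sum>a\<in>A. w a / sum w A) = 1"
proof -
  have "w a < sum w A" if "a \<in> A" "b \<in> A" "a \<noteq> b" for a b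
  proof -
    have "w a + w b \<le> sum w A"
      using sum_mono2[OF assms(1), of "{a, b}" w] that assms(2) by (simp add: less_imp_le)
    then show ?thesis
      using assms(2)[OF \<open>b \<in> A\<close>] by simp
  qed
  then have "w a < sum w A" if "a \<in> A" for a
    using that assms(3-5) by (cases "a = x") blast+
  moreover have "0 < sum w A"
    using assms(1-3) by (intro sum_pos) auto
  ultimately show "\<forall>a\<in>A. 0 < w a / sum w A \<and> w a / sum w A < 1"
    using assms(2) by simp
  from \<open>0 < sum w A\<close> show "(\<Sum>a\<in>A. w a / sum w A) = 1"
    by (simp add: sum_divide_distrib[symmetric])
qed

lemma card_edge_set_le: "card (edge_set n) \<le> n * n"
proof -
  have "edge_set n \<subseteq> {..<n} \<times> {..<n}"
    unfolding edge_set_def by auto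
  then show ?thesis
    using card_mono[of "{..<n} \<times> {..<n}"] by (simp add: card_cartesian_product)
qed

lemma ranking_weight_geometric_sum_error_le:
  fixes t c :: real
  assumes "bij_betw r {..<n} {..<n}" and "0 < t" "t < 1" and "c \<noteq> 0"
  shows "(\<Sum>e\<in>edge_set n. (ranking_weight n r (fst e) (snd e)
            - expert_weight (\<lambda>k. t ^ rank_pos n r k / c) (fst e) (snd e))\<^sup>2) \<le> real n * real n * t"
proof -
  have "(\<Sum>e\<in>edge_set n. (ranking_weight n r (fst e) (snd e)
            - expert_weight (\<lambda>k. t ^ rank_pos n r k / c) (fst e) (snd e))\<^sup>2) \<le> card (edge_set n) * t\<^sup>2"
    using ranking_weight_geometric_error[OF assms(1-3)]
    by (intro sum_bounded_above) (auto simp: expert_weight_scale[OF assms(4)])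
  also have "\<dots> \<le> real n * real n * t"
  proof (rule mult_mono)
    show "real (card (edge_set n)) \<le> real n * real n"
      using card_edge_set_le[of n] by (metis of_nat_le_iff of_nat_mult)
    show "t\<^sup>2 \<le> t"
      using assms(2,3) by (simp add: power2_eq_square mult_left_le)
  qed simp_all
  finally show ?thesis .
qed

lemma exists_small_ratio:
  fixes C \<epsilon> :: real
  assumes "0 \<le> C" and "0 < \<epsilon>"
  shows "\<exists>t. 0 < t \<and> t < 1 \<and> C * t < \<epsilon>"
proof (intro exI conjI)
  let ?t = "min (1/2) (\<epsilon> / (C + 1))"
  show "0 < ?t" "?t < 1"
    using assms by simp_all
  have "C * ?t \<le> C * (\<epsilon> / (C + 1))"
    using assms by (intro mult_left_mono) simp_all
  also have "\<dots> < \<epsilon>"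
    using assms by (simp add: field_simps)
  finally show "C * ?t < \<epsilon>" .
qed

theorem lemma7:
  fixes n :: nat and r :: "nat \<Rightarrow> nat" and \<epsilon> :: real
  assumes "n \<ge> 2" and "bij_betw r {..<n} {..<n}"
    and "\<epsilon> > 0"
  shows "\<exists>p :: nat \<Rightarrow> real.
           (\<forall>i<n. 0 < p i \<and> p i < 1) \<and> (\<Sum>i<n. p i) = 1 \<and>
           (\<Sum>e\<in>edge_set n. (ranking_weight n r (fst e) (snd e)
                                 - expert_weight p (fst e) (snd e))^2) < \<epsilon>"
proof -
  obtain t :: real where t: "0 < t" "t < 1" "real n * real n * t < \<epsilon>"
    using exists_small_ratio[OF _ assms(3)] by (meson mult_nonneg_nonneg of_nat_0_le_iff)
  define w where "w = (\<lambda>k. t ^ rank_pos n r k)"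
  define p where "p = (\<lambda>k. w k / sum w {..<n})"
  have w_pos: "0 < w k" for k
    using t by (simp add: w_def)
  have "0 < (1::nat)" "1 < n"
    using assms(1) by simp_all
  then have "\<forall>i<n. 0 < p i \<and> p i < 1" and "(\<Sum>i<n. p i) = 1"
    using normalized_weights_in_unit_interval[of "{..<n}" w 0 1] w_pos by (simp_all add: p_def)
  moreover have "sum w {..<n} \<noteq> 0"
    using \<open>(\<Sum>i<n. p i) = 1\<close> by (auto simp: p_def)
  then have "(\<Sum>e\<in>edge_set n. (ranking_weight n r (fst e) (snd e)
                                  - expert_weight p (fst e) (snd e))^2) < \<epsilon>"
    using ranking_weight_geometric_sum_error_le[OF assms(2) t(1,2)] t(3)
    unfolding p_def w_def by (meson order_le_less_trans)
  ultimately show ?thesis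
    by blast
qed

end
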